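(* Let $G$ be a random graph from the $G(N,p)$ model conditioned on being connected, with $p\le 1/2$. Then with probability at least $1/3$, $G$ has at least $p\binom{N}{2}$ edges.
   Context: $G(N,p)$ is the random graph on $N$ labeled vertices in which each of the $\binom N2$ possible edges is present independently with probability $p$. *)

theory Defs
  imports Complex_Main
begin

text \<open>Simple graphs on the labelled vertex set {0..<N}, represented by their edge sets:
  an edge is a 2-element set {i,j} with i < j < N.\<close>

definition all_edges :: "nat \<Rightarrow> nat set set" where
  "all_edges N = {e. \<exists>i j. i < j \<and> j < N \<and> e = {i, j}}"

definition graphs :: "nat \<Rightarrow> nat set set set" where
  "graphs N = Pow (all_edges N)"

definition connected_graph :: "nat \<Rightarrow> nat set set \<Rightarrow> bool" where
  "connected_graph N S \<longleftrightarrow>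
     (\<forall>u<N. \<forall>v<N. (u, v) \<in> {(x, y). {x, y} \<in> S}\<^sup>*)"

text \<open>Probability of the outcome S in G(N,p): each of the N choose 2 edges present
  independently with probability p.\<close>

definition gnp_prob :: "nat \<Rightarrow> real \<Rightarrow> nat set set \<Rightarrow> real" where
  "gnp_prob N p S = p ^ card S * (1 - p) ^ (card (all_edges N) - card S)"

definition gnp_event :: "nat \<Rightarrow> real \<Rightarrow> nat set set set \<Rightarrow> real" where
  "gnp_event N p A = (\<Sum>S\<in>A \<inter> graphs N. gnp_prob N p S)"

definition gnp_cond :: "nat \<Rightarrow> real \<Rightarrow> nat set set set \<Rightarrow> nat set set set \<Rightarrow> real" where
  "gnp_cond N p A B = gnp_event N p (A \<inter> B) / gnp_event N p B"

end

theory Submission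
  imports Defs
begin

text \<open>Let w(k) be the G(N,p)-probability of being connected with exactly k edges, and
  M = N choose 2. Adding an edge keeps a graph connected, so double counting the connected
  graphs C(k) with k edges gives |C(k)| (M - k) \<le> |C(k + 1)| (k + 1): the ratio
  w(k + 1) / w(k) dominates the corresponding ratio of Bin(M, p). For t = \<lceil>pM\<rceil> this makes
  w(a) \<le> w(b) whenever a \<le> b and a + b + 3 \<le> 2t, so pairing k with 2t - 3 - k bounds the mass
  below t - 2 by the mass from t on. The ratio bound near t controls w(t - 2) and w(t - 1),
  and w vanishes below N - 1, which settles small N. Hence the mass below t is at most
  twice the mass from t on.\<close>

lemma all_edges_eq: "all_edges N = {e. e \<subseteq> {0..<N} \<and> card e = 2}"
proof -
  have "e \<in> all_edges N \<longleftrightarrow> e \<subseteq> {0..<N} \<and> card e = 2" for e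
  proof
    assume "e \<in> all_edges N"
    then show "e \<subseteq> {0..<N} \<and> card e = 2"
      unfolding all_edges_def by auto
  next
    assume e: "e \<subseteq> {0..<N} \<and> card e = 2"
    then obtain x y where xy: "e = {x, y}" "x < y"
      by (auto simp: card_2_iff linorder_neq_iff insert_commute)
    then show "e \<in> all_edges N"
      using e unfolding all_edges_def by auto
  qed
  then show ?thesis by auto
qed

lemma card_all_edges: "card (all_edges N) = N choose 2"
  unfolding all_edges_eq by (simp add: n_subsets)

lemma finite_all_edges: "finite (all_edges N)"
  unfolding all_edges_eq by (rule finite_subset[of _ "Pow {0..<N}"]) auto

lemma doubleton_in_all_edges: "u < N \<Longrightarrow> v < N \<Longrightarrow> u \<noteq> v \<Longrightarrow> {u, v} \<in> all_edges N"
  unfolding all_edges_eq by simp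

lemma finite_graphs: "finite (graphs N)"
  unfolding graphs_def by (simp add: finite_all_edges)

lemma finite_graph: "S \<in> graphs N \<Longrightarrow> finite S"
  unfolding graphs_def using finite_all_edges finite_subset by blast

lemma connected_graph_mono: "connected_graph N S \<Longrightarrow> S \<subseteq> T \<Longrightarrow> connected_graph N T"
proof -
  assume "connected_graph N S" and "S \<subseteq> T"
  then have "{(x, y). {x, y} \<in> S}\<^sup>* \<subseteq> {(x, y). {x, y} \<in> T}\<^sup>*"
    by (intro rtrancl_mono) auto
  with \<open>connected_graph N S\<close> show ?thesis
    unfolding connected_graph_def by blast
qed

lemma connected_graph_all_edges: "connected_graph N (all_edges N)"
  unfolding connected_graph_def
proof (intro allI impI)
  fix u v assume "u < N" "v < N"
  then show "(u, v) \<in> {(x, y). {x, y} \<in> all_edges N}\<^sup>*"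
    by (cases "u = v") (auto intro: r_into_rtrancl doubleton_in_all_edges)
qed

definition steps_to :: "('a \<times> 'a) set \<Rightarrow> 'a \<Rightarrow> 'a \<Rightarrow> nat" where
  "steps_to R z v = (LEAST n. (v, z) \<in> R ^^ n)"

lemma step_closer:
  assumes "(v, z) \<in> R\<^sup>*" and "v \<noteq> z"
  shows "\<exists>w. (v, w) \<in> R \<and> steps_to R z w < steps_to R z v"
proof -
  obtain n where "(v, z) \<in> R ^^ n"
    using assms(1) rtrancl_power by blast
  then have shortest: "(v, z) \<in> R ^^ steps_to R z v"
    unfolding steps_to_def by (rule LeastI)
  then obtain m where m: "steps_to R z v = Suc m"
    using assms(2) by (cases "steps_to R z v") auto
  then obtain w where w: "(v, w) \<in> R" "(w, z) \<in> R ^^ m"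
    using shortest relpow_Suc_D2 by metis
  have "steps_to R z w \<le> m"
    unfolding steps_to_def using w(2) by (rule Least_le)
  then show ?thesis
    using w(1) m by auto
qed

text \<open>Each vertex v \<noteq> 0 has a parent strictly closer to 0, and v \<mapsto> {v, parent v} is injective.\<close>

lemma card_connected_graph_ge:
  assumes "S \<in> graphs N" and "connected_graph N S"
  shows "N - 1 \<le> card S"
proof -
  define R where "R = {(x, y). {x, y} \<in> S}"
  have "\<forall>v\<in>{1..<N}. \<exists>w. (v, w) \<in> R \<and> steps_to R 0 w < steps_to R 0 v"
  proof
    fix v assume "v \<in> {1..<N}"
    then have "(v, 0) \<in> R\<^sup>*" "v \<noteq> 0"
      using assms(2) unfolding connected_graph_def R_def by auto
    then show "\<exists>w. (v, w) \<in> R \<and> steps_to R 0 w < steps_to R 0 v"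
      by (rule step_closer)
  qed
  then obtain parent where parent:
    "\<And>v. v \<in> {1..<N} \<Longrightarrow> (v, parent v) \<in> R \<and> steps_to R 0 (parent v) < steps_to R 0 v"
    by metis
  have "inj_on (\<lambda>v. {v, parent v}) {1..<N}"
  proof (rule inj_onI)
    fix v v' assume v: "v \<in> {1..<N}" and v': "v' \<in> {1..<N}"
      and eq: "{v, parent v} = {v', parent v'}"
    show "v = v'"
    proof (rule ccontr)
      assume "v \<noteq> v'"
      then have "v = parent v'" "v' = parent v"
        using eq by (auto simp: doubleton_eq_iff)
      then show False
        using parent[OF v] parent[OF v'] by simp
    qed
  qed
  moreover have "(\<lambda>v. {v, parent v}) ` {1..<N} \<subseteq> S"
    using parent unfolding R_def by auto
  ultimately have "card {1..<N} \<le> card S"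
    using card_inj_on_le finite_graph[OF assms(1)] by blast
  then show ?thesis by simp
qed

definition connected_edge_sets :: "nat \<Rightarrow> nat \<Rightarrow> nat set set set" where
  "connected_edge_sets N k = {S \<in> graphs N. connected_graph N S \<and> card S = k}"

lemma finite_connected_edge_sets: "finite (connected_edge_sets N k)"
  unfolding connected_edge_sets_def using finite_graphs by simp

lemma connected_edge_sets_below_tree: "k < N - 1 \<Longrightarrow> connected_edge_sets N k = {}"
  unfolding connected_edge_sets_def using card_connected_graph_ge by fastforce

lemma all_edges_in_connected_edge_sets:
  "all_edges N \<in> connected_edge_sets N (card (all_edges N))"
  unfolding connected_edge_sets_def graphs_def using connected_graph_all_edges by auto

lemma insert_in_connected_edge_sets:
  assumes "S \<in> connected_edge_sets N k" and "e \<in> all_edges N - S"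
  shows "insert e S \<in> connected_edge_sets N (Suc k)"
proof -
  have "finite S"
    using assms(1) finite_graph unfolding connected_edge_sets_def by blast
  then show ?thesis
    using assms connected_graph_mono[of N S "insert e S"]
    unfolding connected_edge_sets_def graphs_def by auto
qed

text \<open>Double counting of the pairs (S, e) with S connected, |S| = k and e \<notin> S: adding e
  gives a connected graph with k + 1 edges, from which (S, e) is recovered by deleting e.\<close>

lemma card_connected_edge_sets_Suc:
  assumes "k < card (all_edges N)"
  shows "card (connected_edge_sets N k) * (card (all_edges N) - k)
           \<le> card (connected_edge_sets N (Suc k)) * Suc k"
proof -
  let ?E = "all_edges N" and ?C = "connected_edge_sets N"
  define P where "P = Sigma (?C k) (\<lambda>S. ?E - S)"
  define Q where "Q = Sigma (?C (Suc k)) (\<lambda>H. H)"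
  have edges_of: "S \<subseteq> ?E" "finite S" "card S = j" if "S \<in> ?C j" for S j
    using that finite_graph unfolding connected_edge_sets_def graphs_def by auto
  have "card P = (\<Sum>S\<in>?C k. card (?E - S))"
    unfolding P_def using finite_connected_edge_sets finite_all_edges by simp
  also have "\<dots> = (\<Sum>S\<in>?C k. card ?E - k)"
  proof (rule sum.cong)
    fix S assume "S \<in> ?C k"
    then show "card (?E - S) = card ?E - k"
      using edges_of by (simp add: card_Diff_subset)
  qed simp
  also have "\<dots> = card (?C k) * (card ?E - k)"
    by simp
  finally have card_P: "card P = card (?C k) * (card ?E - k)" .
  have "card Q = (\<Sum>H\<in>?C (Suc k). card H)"
    unfolding Q_def using finite_connected_edge_sets edges_of by (intro card_SigmaI) auto
  also have "\<dots> = card (?C (Suc k)) * Suc k"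
    using edges_of by simp
  finally have card_Q: "card Q = card (?C (Suc k)) * Suc k" .
  have "inj_on (\<lambda>(S, e). (insert e S, e)) P"
    unfolding P_def by (rule inj_onI) (auto simp: insert_ident)
  moreover have "(\<lambda>(S, e). (insert e S, e)) ` P \<subseteq> Q"
    unfolding P_def Q_def using insert_in_connected_edge_sets by auto
  moreover have "finite Q"
    unfolding Q_def using finite_connected_edge_sets edges_of by auto
  ultimately have "card P \<le> card Q"
    by (rule card_inj_on_le)
  then show ?thesis
    using card_P card_Q by simp
qed

definition connected_weight :: "nat \<Rightarrow> real \<Rightarrow> nat \<Rightarrow> real" where
  "connected_weight N p k =
     real (card (connected_edge_sets N k)) * (p ^ k * (1 - p) ^ (card (all_edges N) - k))"

lemma gnp_event_connected_by_size:
  "gnp_event N p ({S. card S \<in> K} \<inter> {S. connected_graph N S})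
     = sum (connected_weight N p) (K \<inter> {..card (all_edges N)})"
proof -
  let ?M = "card (all_edges N)"
  define X where "X = {S. card S \<in> K} \<inter> {S. connected_graph N S} \<inter> graphs N"
  have "card ` X \<subseteq> {..?M}"
    unfolding X_def graphs_def using finite_all_edges by (auto intro: card_mono)
  then have "gnp_event N p ({S. card S \<in> K} \<inter> {S. connected_graph N S})
      = (\<Sum>k\<le>?M. sum (gnp_prob N p) {S \<in> X. card S = k})"
    unfolding gnp_event_def X_def[symmetric]
    using sum.group[of X "{..?M}" card "gnp_prob N p"] X_def finite_graphs by simp
  also have "\<dots> = (\<Sum>k\<le>?M. if k \<in> K then connected_weight N p k else 0)"
  proof (rule sum.cong)
    fix k
    have "{S \<in> X. card S = k} = (if k \<in> K then connected_edge_sets N k else {})"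
      unfolding X_def connected_edge_sets_def by auto
    then show "sum (gnp_prob N p) {S \<in> X. card S = k}
        = (if k \<in> K then connected_weight N p k else 0)"
      unfolding connected_weight_def gnp_prob_def connected_edge_sets_def by simp
  qed simp
  also have "\<dots> = sum (connected_weight N p) (K \<inter> {..?M})"
    by (subst Int_commute) (simp add: sum.inter_restrict)
  finally show ?thesis .
qed

lemma gnp_event_connected:
  "gnp_event N p {S. connected_graph N S} = sum (connected_weight N p) {..N choose 2}"
  using gnp_event_connected_by_size[of N p UNIV] by (simp add: card_all_edges)

lemma gnp_event_connected_card_ge:
  "gnp_event N p ({S. x \<le> real (card S)} \<inter> {S. connected_graph N S})
     = sum (connected_weight N p) {nat \<lceil>x\<rceil>..N choose 2}"
proof -
  have "{k. x \<le> real k} \<inter> {..N choose 2} = {nat \<lceil>x\<rceil>..N choose 2}"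
    by (auto simp: nat_le_iff ceiling_le_iff)
  then show ?thesis
    using gnp_event_connected_by_size[of N p "{k. x \<le> real k}"] by (simp add: card_all_edges)
qed

lemma connected_weight_nonneg: "0 \<le> p \<Longrightarrow> p \<le> 1 \<Longrightarrow> 0 \<le> connected_weight N p k"
  unfolding connected_weight_def by simp

lemma connected_weight_all_edges_pos:
  assumes "0 < p"
  shows "0 < connected_weight N p (card (all_edges N))"
proof -
  have "connected_edge_sets N (card (all_edges N)) \<noteq> {}"
    using all_edges_in_connected_edge_sets by blast
  then have "0 < card (connected_edge_sets N (card (all_edges N)))"
    using finite_connected_edge_sets by (simp add: card_gt_0_iff)
  then show ?thesis
    unfolding connected_weight_def using assms by simp
qed

lemma sum_connected_weight_upper_pos:
  assumes "0 < p" and "p \<le> 1" and "t \<le> N choose 2"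
  shows "0 < sum (connected_weight N p) {t..N choose 2}"
proof -
  have "0 < connected_weight N p (N choose 2)"
    using connected_weight_all_edges_pos[OF assms(1), of N] by (simp add: card_all_edges)
  also have "\<dots> \<le> sum (connected_weight N p) {t..N choose 2}"
    using assms connected_weight_nonneg by (intro member_le_sum) simp_all
  finally show ?thesis .
qed

lemma connected_weight_below_tree: "k < N - 1 \<Longrightarrow> connected_weight N p k = 0"
  unfolding connected_weight_def by (simp add: connected_edge_sets_below_tree)

lemma connected_weight_ratio:
  assumes "0 \<le> p" and "p \<le> 1" and k: "k < card (all_edges N)"
  shows "connected_weight N p k * (real (card (all_edges N) - k) * p)
           \<le> connected_weight N p (Suc k) * (real (Suc k) * (1 - p))"
proof -
  let ?M = "card (all_edges N)" and ?C = "\<lambda>j. real (card (connected_edge_sets N j))"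
  define q where "q = p ^ Suc k * (1 - p) ^ (?M - k)"
  have "(1 - p) ^ (?M - k) = (1 - p) ^ (?M - Suc k) * (1 - p)"
    using k by (metis Suc_diff_Suc power_Suc2)
  then have rhs: "connected_weight N p (Suc k) * (real (Suc k) * (1 - p)) = ?C (Suc k) * real (Suc k) * q"
    unfolding connected_weight_def q_def by (simp add: mult_ac)
  have lhs: "connected_weight N p k * (real (?M - k) * p) = ?C k * real (?M - k) * q"
    unfolding connected_weight_def q_def by (simp add: mult_ac)
  have "0 \<le> q"
    unfolding q_def using assms by simp
  moreover have "?C k * real (?M - k) \<le> ?C (Suc k) * real (Suc k)"
    using card_connected_edge_sets_Suc[OF k] by (metis of_nat_le_iff of_nat_mult)
  ultimately show ?thesis
    unfolding lhs rhs by (rule mult_right_mono[rotated])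
qed

text \<open>The binomial ratios at a and at b - 1 multiply to at most 1 when a and b lie
  symmetrically below the mean.\<close>

lemma binomial_ratio_product_le:
  fixes m a b p :: real
  assumes "0 < p" and "p \<le> 1/2" and "0 \<le> a" and "a + 1 \<le> b" and "b \<le> m"
    and "a + b + 1 \<le> 2 * (m + 1) * p"
  shows "(a + 1) * b * ((1 - p) * (1 - p)) \<le> (m - a) * (m - b + 1) * (p * p)"
proof -
  define c where "c = (a + b) / 2"
  define w where "w = (b - a - 1) / 2"
  define A where "A = (m - c + 1/2) * p"
  define B where "B = (c + 1/2) * (1 - p)"
  have "0 \<le> B"
    using assms unfolding B_def c_def by simp
  moreover have "A - B = (2 * (m + 1) * p - (a + b + 1)) / 2"
    unfolding A_def B_def c_def by (simp add: field_simps)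
  then have "B \<le> A"
    using assms by simp
  ultimately
  have "B * B \<le> A * A"
    by (simp add: mult_mono)
  moreover have "(w * w) * (p * p) \<le> (w * w) * ((1 - p) * (1 - p))"
    using assms by (intro mult_left_mono mult_mono) auto
  moreover have "(a + 1) * b * ((1 - p) * (1 - p)) = B * B - (w * w) * ((1 - p) * (1 - p))"
    and "(m - a) * (m - b + 1) * (p * p) = A * A - (w * w) * (p * p)"
    unfolding A_def B_def c_def w_def by (simp_all add: field_simps)
  ultimately show ?thesis
    by linarith
qed

lemma le_of_ratio_chain:
  fixes x y z w u v u' v' :: real
  assumes "x * u \<le> y * v" and "y \<le> z" and "z * u' \<le> w * v'" and "v * v' \<le> u * u'"
    and "0 \<le> x" and "0 \<le> v" and "0 \<le> u'" and "0 < v * v'"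
  shows "x \<le> w"
proof -
  have "x * (v * v') \<le> x * (u * u')"
    using assms(4,5) by (rule mult_left_mono)
  also have "\<dots> \<le> y * v * u'"
    using mult_right_mono[OF assms(1,7)] by (simp add: mult_ac)
  also have "\<dots> \<le> z * u' * v"
    using mult_right_mono[OF assms(2), of "v * u'"] assms(6,7) by (simp add: mult_ac)
  also have "\<dots> \<le> w * v' * v"
    using mult_right_mono[OF assms(3,6)] .
  finally have "(v * v') * x \<le> (v * v') * w"
    by (simp add: mult_ac)
  then show ?thesis
    using assms(8) by (simp add: mult_le_cancel_left_pos)
qed

text \<open>Equivalently, F k / ((M choose k) p^k (1-p)^(M-k)) is nondecreasing in k.\<close>

locale binomial_ratio_dominated =
  fixes F :: "nat \<Rightarrow> real" and M :: nat and p :: real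
  assumes p_pos: "0 < p" and p_le_half: "p \<le> 1/2"
    and nonneg: "0 \<le> F k"
    and ratio: "k < M \<Longrightarrow> F k * (real (M - k) * p) \<le> F (Suc k) * (real (Suc k) * (1 - p))"
begin

lemma le_Suc:
  assumes "k < M" and "real (Suc k) * (1 - p) \<le> real (M - k) * p"
  shows "F k \<le> F (Suc k)"
proof -
  have "F k * (real (Suc k) * (1 - p)) \<le> F k * (real (M - k) * p)"
    using assms(2) nonneg by (rule mult_left_mono)
  also have "\<dots> \<le> F (Suc k) * (real (Suc k) * (1 - p))"
    using ratio[OF assms(1)] .
  finally show ?thesis
    using p_le_half by (simp add: mult_le_cancel_right)
qed

lemma le_add_below_threshold:
  "a + n \<le> M \<Longrightarrow> real (2 * a + n + 1) \<le> 2 * (real M + 1) * p \<Longrightarrow> F a \<le> F (a + n)"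
proof (induction n arbitrary: a rule: nat_induct2)
  case 0
  then show ?case by simp
next
  case 1
  then have "real (Suc a) * (1 - p) \<le> real (M - a) * p"
    by (simp add: of_nat_diff algebra_simps)
  then show ?case
    using le_Suc 1 by simp
next
  case (step n)
  let ?b = "a + (n + 2)"
  let ?u = "real (M - a) * p" and ?v = "real (Suc a) * (1 - p)"
  let ?u' = "real (M - (Suc a + n)) * p" and ?v' = "real ?b * (1 - p)"
  have middle: "F (Suc a) \<le> F (Suc a + n)"
    using step.IH[of "Suc a"] step.prems by (simp add: algebra_simps)
  have first: "F a * ?u \<le> F (Suc a) * ?v"
    using ratio step.prems by simp
  have last: "F (Suc a + n) * ?u' \<le> F ?b * ?v'"
    using ratio[of "Suc a + n"] step.prems by simp
  have "(real a + 1) * real ?b * ((1 - p) * (1 - p))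
      \<le> (real M - real a) * (real M - real ?b + 1) * (p * p)"
    using binomial_ratio_product_le[OF p_pos p_le_half, of "real a" "real ?b" "real M"] step.prems
    by simp
  then have "?v * ?v' \<le> ?u * ?u'"
    using step.prems by (simp add: of_nat_diff algebra_simps)
  moreover have "0 < ?v * ?v'"
    using p_le_half by simp
  ultimately show ?case
    using le_of_ratio_chain[OF first middle last _ nonneg] p_pos p_le_half by simp
qed

lemma le_mirror:
  assumes "real t - 1 < real M * p" and "a \<le> b" and "b \<le> M" and "a + b + 3 \<le> 2 * t"
  shows "F a \<le> F b"
proof -
  have "real (2 * a + (b - a) + 1) \<le> 2 * (real M + 1) * p"
    using assms p_pos by (simp add: algebra_simps)
  then show ?thesis
    using le_add_below_threshold[of a "b - a"] assms by simp
qed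

lemma threshold_le_half: "real t - 1 < real M * p \<Longrightarrow> 2 * t \<le> M + 1"
proof -
  assume "real t - 1 < real M * p"
  moreover have "real M * p \<le> real M / 2"
    using p_le_half mult_left_mono[of p "1/2" "real M"] by simp
  ultimately show ?thesis
    by linarith
qed

lemma lower_part_le_upper_tail:
  assumes t: "real t - 1 < real M * p"
  shows "sum F {..<t - 2} \<le> sum F {t..M}"
proof -
  have "2 * t \<le> M + 1"
    using threshold_le_half[OF t] .
  have "sum F {..<t - 2} \<le> (\<Sum>k<t - 2. F (2 * t - 3 - k))"
    using le_mirror[OF t] \<open>2 * t \<le> M + 1\<close> by (intro sum_mono) simp
  also have "\<dots> = sum F ((\<lambda>k. 2 * t - 3 - k) ` {..<t - 2})"
    by (rule sum.reindex[symmetric, unfolded comp_def]) (auto simp: inj_on_def)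
  also have "\<dots> \<le> sum F {t..M}"
    using \<open>2 * t \<le> M + 1\<close> nonneg by (intro sum_mono2) auto
  finally show ?thesis .
qed

lemma ratio_near_threshold:
  assumes t: "real t - 1 < real M * p" and "t + j \<le> M" and "real j + 1 \<le> T" and "T \<le> real t"
  shows "F (t - 1 + j) * ((T - 1 - real j) / (T + real j)) \<le> F (t + j)"
proof -
  define k where "k = t - 1 + j"
  have k: "k < M" "Suc k = t + j" "real k = real t - 1 + real j"
    using assms unfolding k_def by (auto simp: of_nat_diff)
  have "real j * p \<le> real j * (1 - p)"
    using p_le_half by (intro mult_left_mono) auto
  moreover have Mk: "real (M - k) = real M - (real t - 1 + real j)"
    using k by (simp add: of_nat_diff)
  ultimately have "(real t - 1 - real j) * (1 - p) \<le> real (M - k) * p"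
    using t unfolding Mk by (simp add: algebra_simps)
  then have "F k * ((real t - 1 - real j) * (1 - p)) \<le> F k * (real (M - k) * p)"
    using nonneg by (rule mult_left_mono)
  also have "\<dots> \<le> F (t + j) * ((real t + real j) * (1 - p))"
    using ratio[OF k(1)] k(2) by simp
  finally have "F k * (real t - 1 - real j) \<le> F (t + j) * (real t + real j)"
    using p_le_half by (simp add: mult.assoc[symmetric] mult_le_cancel_right)
  have "(T - 1 - real j) * (real t + real j) \<le> (real t - 1 - real j) * (T + real j)"
  proof -
    have "(real t - 1 - real j) * (T + real j) - (T - 1 - real j) * (real t + real j)
        = (real t - T) * (2 * real j + 1)"
      by (simp add: algebra_simps)
    moreover have "0 \<le> (real t - T) * (2 * real j + 1)"
      using assms by simp
    ultimately show ?thesis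
      by linarith
  qed
  then have "(T - 1 - real j) / (T + real j) \<le> (real t - 1 - real j) / (real t + real j)"
    using assms by (simp add: divide_simps)
  then have "F k * ((T - 1 - real j) / (T + real j)) \<le> F k * ((real t - 1 - real j) / (real t + real j))"
    using nonneg by (rule mult_left_mono)
  also have "\<dots> = F k * (real t - 1 - real j) / (real t + real j)"
    by simp
  also have "\<dots> \<le> F (t + j)"
    using \<open>F k * (real t - 1 - real j) \<le> F (t + j) * (real t + real j)\<close> assms
    by (simp add: pos_divide_le_eq)
  finally show ?thesis
    unfolding k_def .
qed

lemma sum_below_threshold_le:
  assumes t: "real t - 1 < real M * p" and "2 \<le> t"
  shows "sum F {..<t} \<le> sum F {..<t - 2} + 2 * F (t - 1)"
proof -
  obtain u where u: "t = u + 2"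
    using \<open>2 \<le> t\<close> by (intro that[of "t - 2"]) simp
  have "F (t - 2) \<le> F (t - 1)"
    using le_mirror[OF t, of "t - 2" "t - 1"] threshold_le_half[OF t] \<open>2 \<le> t\<close> by simp
  moreover have "sum F {..<t} = sum F {..<t - 2} + F (t - 2) + F (t - 1)"
    unfolding u by (simp add: numeral_eq_Suc)
  ultimately show ?thesis
    by simp
qed

lemma first_six_le_upper_tail:
  assumes "t + 5 \<le> M"
  shows "F t + F (t + 1) + F (t + 2) + F (t + 3) + F (t + 4) + F (t + 5) \<le> sum F {t..M}"
proof -
  have "(\<Sum>j<6. F (t + j)) = sum F ((+) t ` {..<6})"
    by (simp add: sum.reindex)
  also have "\<dots> \<le> sum F {t..M}"
    using assms nonneg by (intro sum_mono2) auto
  finally show ?thesis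
    by (simp add: numeral_eq_Suc add.commute)
qed

lemma lower_tail_le_twice_upper:
  assumes zero: "\<And>k. k < s \<Longrightarrow> F k = 0" and t: "real t - 1 < real M * p"
    and "s < t" and "t + 5 \<le> M" and "4 \<le> s" and "t \<le> s + 2 \<or> 5 \<le> s"
  shows "sum F {..<t} \<le> 2 * sum F {t..M}"
proof -
  let ?U = "sum F {t..M}"
  have below: "sum F {..<t} \<le> sum F {..<t - 2} + 2 * F (t - 1)"
    using sum_below_threshold_le[OF t] assms by simp
  have upper: "F t + F (t + 1) + F (t + 2) + F (t + 3) + F (t + 4) + F (t + 5) \<le> ?U"
    using first_six_le_upper_tail assms by simp
  then have upper_two: "F t + F (t + 1) \<le> ?U"
    using nonneg[of "t + 2"] nonneg[of "t + 3"] nonneg[of "t + 4"] nonneg[of "t + 5"] by linarith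
  have ratio_at: "F (t - 1 + j) * ((T - 1 - real j) / (T + real j)) \<le> F (t + j)"
    if "j \<le> 5" "real j + 1 \<le> T" "T \<le> real t" for j T
    using ratio_near_threshold[OF t _ that(2,3)] that(1) assms by simp
  have "5 \<le> t"
    using assms by simp
  \<comment> \<open>In each case the ratio bounds are taken at T = 5, 8, 9, the least possible t.\<close>
  consider "t \<le> s + 2" | "t = s + 3" | "s + 4 \<le> t"
    by linarith
  then show ?thesis
  proof cases
    case 1
    then have "sum F {..<t - 2} = 0"
      using zero by simp
    moreover have "F (t - 1) * (4/5) \<le> F t" "F t * (1/2) \<le> F (t + 1)"
      using ratio_at[of 0 5] ratio_at[of 1 5] \<open>5 \<le> t\<close> by simp_all
    ultimately show ?thesis
      using below upper_two nonneg[of t] by linarith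
  next
    case 2
    then have "8 \<le> t"
      using assms by simp
    from 2 have "sum F {..<t - 2} = F s"
      using zero by (simp add: sum.lessThan_Suc)
    moreover have "F s \<le> F t"
      using le_mirror[OF t, of s t] 2 assms by simp
    moreover have "F (t - 1) * (7/8) \<le> F t" "F t * (6/9) \<le> F (t + 1)"
      using ratio_at[of 0 8] ratio_at[of 1 8] \<open>8 \<le> t\<close> by simp_all
    ultimately show ?thesis
      using below upper_two nonneg[of t] by linarith
  next
    case 3
    then have "9 \<le> t"
      using assms by simp
    then have "F (t - 1) * (8/9) \<le> F t" "F t * (7/10) \<le> F (t + 1)"
      "F (t + 1) * (6/11) \<le> F (t + 2)" "F (t + 2) * (5/12) \<le> F (t + 3)"
      "F (t + 3) * (4/13) \<le> F (t + 4)" "F (t + 4) * (3/14) \<le> F (t + 5)"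
      using ratio_at[of 0 9] ratio_at[of 1 9] ratio_at[of 2 9] ratio_at[of 3 9]
        ratio_at[of 4 9] ratio_at[of 5 9] by (simp_all add: add.commute)
    then show ?thesis
      using below upper lower_part_le_upper_tail[OF t] nonneg[of t] by linarith
  qed
qed

end

lemma connected_weight_binomial_ratio_dominated:
  assumes "0 < p" and "p \<le> 1/2"
  shows "binomial_ratio_dominated (connected_weight N p) (N choose 2) p"
  using assms connected_weight_nonneg connected_weight_ratio
  by unfold_locales (auto simp: card_all_edges)

lemma five_le_of_threshold_above_tree:
  assumes "N - 1 < t" and "2 * t \<le> (N choose 2) + 1"
  shows "5 \<le> N"
proof (rule ccontr)
  assume "\<not> 5 \<le> N"
  then have "N \<in> {0, 1, 2, 3, 4}"
    by auto
  then show False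
    using assms unfolding choose_two by auto
qed

lemma connected_weight_lower_tail_le:
  assumes "0 < p" and "p \<le> 1/2" and t: "real t - 1 < real (N choose 2) * p"
  shows "sum (connected_weight N p) {..<t} \<le> 2 * sum (connected_weight N p) {t..N choose 2}"
proof -
  let ?M = "N choose 2"
  interpret binomial_ratio_dominated "connected_weight N p" ?M p
    using connected_weight_binomial_ratio_dominated[OF assms(1,2)] .
  show ?thesis
  proof (cases "t \<le> N - 1")
    case True
    then have "sum (connected_weight N p) {..<t} = 0"
      by (simp add: connected_weight_below_tree)
    then show ?thesis
      using nonneg by (simp add: sum_nonneg)
  next
    case False
    have "2 * t \<le> ?M + 1"
      using threshold_le_half[OF t] .
    have "5 \<le> N"
      using False by (intro five_le_of_threshold_above_tree[OF _ \<open>2 * t \<le> ?M + 1\<close>]) simp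
    then have "10 \<le> ?M"
      using div_le_mono[of 20 "N * (N - 1)" 2] mult_le_mono[of 5 N 4 "N - 1"]
      by (simp add: choose_two)
    moreover have "t \<le> N + 1 \<or> 6 \<le> N"
      using \<open>2 * t \<le> ?M + 1\<close> \<open>5 \<le> N\<close> by (cases "N = 5") (auto simp: choose_two)
    ultimately have "t + 5 \<le> ?M" "t \<le> N - 1 + 2 \<or> 5 \<le> N - 1"
      using \<open>2 * t \<le> ?M + 1\<close> by linarith+
    moreover have "N - 1 < t" "4 \<le> N - 1"
      using False \<open>5 \<le> N\<close> by linarith+
    ultimately show ?thesis
      using lower_tail_le_twice_upper[OF connected_weight_below_tree t] by blast
  qed
qed

theorem mainTheorem11:
  fixes N :: nat and p :: real
  assumes "0 < p" and "p \<le> 1/2"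
  shows "gnp_cond N p {S. real (card S) \<ge> p * real (N choose 2)}
                      {S. connected_graph N S} \<ge> 1/3"
proof -
  let ?M = "N choose 2" and ?w = "connected_weight N p"
  define t where "t = nat \<lceil>p * real ?M\<rceil>"
  have t: "real t - 1 < real ?M * p"
    unfolding t_def using assms by (simp add: mult.commute) linarith
  then have "2 * t \<le> ?M + 1"
    using binomial_ratio_dominated.threshold_le_half[OF connected_weight_binomial_ratio_dominated]
      assms by blast
  then have "{..?M} = {..<t} \<union> {t..?M}"
    by auto
  then have "gnp_event N p {S. connected_graph N S} = sum ?w {..<t} + sum ?w {t..?M}"
    unfolding gnp_event_connected by (simp add: sum.union_disjoint ivl_disj_int)
  moreover have "0 < sum ?w {t..?M}"
    using sum_connected_weight_upper_pos assms \<open>2 * t \<le> ?M + 1\<close> by simp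
  moreover have "0 \<le> sum ?w {..<t}"
    using assms by (intro sum_nonneg) (simp add: connected_weight_nonneg)
  moreover have "sum ?w {..<t} \<le> 2 * sum ?w {t..?M}"
    using connected_weight_lower_tail_le[OF assms t] .
  ultimately show ?thesis
    unfolding gnp_cond_def gnp_event_connected_card_ge t_def[symmetric]
    by (simp add: pos_le_divide_eq)
qed

end
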